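(* Let $0<p<1$, $0\le r\le1$ with $p\ne r$, $m:=r/p>1$, $T\in\mathbb{N}$ and $k\in\mathbb{N}$. Let $(H_i)_{i\ge1}$ be i.i.d. with $\mathbb{P}(H>n)=\frac{r-p}{(1-p)m^n-(1-r)}$ for $n\ge0$, $H_0:=T$, $N_T:=\min\{i\ge1:H_i>T\}$. Conditionally on $\{N_T\ge k\}$, choose $k$ tips $s_0<\dots<s_{k-1}$ uniformly at random among the subsets of size $k$ of $\{0,\dots,N_T-1\}$ (independently of $(H_i)$ given $N_T$); set $H_{k,0}:=T$ and $H_{k,i}:=\max\{H_{s_{i-1}+1},\dots,H_{s_i}\}$ for $1\le i<k$, and let $\mathbf{T}_k$ be the ultrametric oriented tree with node depths $(H_{k,0},\dots,H_{k,k-1})$. Let $\delta_T:=\mathbb{P}(H>T)$ and $$\mu_k(\mathrm{d}y):=\frac{k\,\delta_T\,y^{k-1}}{(1-(1-\delta_T)(1-y))^{k+1}}\,\mathrm{d}y,\qquad y\in(0,1).$$ Then: (1) Conditionally on $\{N_T\ge k\}$, $(H_{k,0},H_{k,1},\dots,H_{k,k-1})$ has the same law as $(T,G_1,\dots,G_{k-1})$, where $Y$ is a random variable with law $\mu_k$ and, conditionally on $Y=y$, $G_1,\dots,G_{k-1}$ are i.i.d. with $$\mathbb{P}(G_i\le j\mid Y=y)=\frac{m^j-1}{m^T-1}\cdot\frac{r-p+y(1-p)(m^T-1)}{r-p+y(1-p)(m^j-1)},\qquad 1\le j\le T.$$ (2) For every ultrametric oriented tree $\tau$ with node depths $x_0=T$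 and $x_1,\dots,x_{k-1}\in\{1,\dots,T\}$, the likelihood of $(p,r)$ given $\{\mathbf{T}_k=\tau\}$ is $$\mathcal{L}(p,r\mid\tau,k)=\mathbb{P}(\mathbf{T}_k=\tau\mid N_T\ge k)=\int_0^1\mu_k(\mathrm{d}y)\prod_{i=1}^{k-1}\frac{\mathbb{P}(H_{y}=x_i)}{\mathbb{P}(H_{y}\le T)},$$ where, for $y\in(0,1)$, $H_y$ denotes a random variable with $\mathbb{P}(H_y>n)=\frac{r-p}{y(1-p)m^n-[y(1-p)-(r-p)]}$ for $n\ge0$.
   Context: $(H_i)_{i\ge1}$ is the coalescent point process of a Bienaymé–Galton–Watson process with $(p,r)$-linear fractional offspring law $\mathbb{P}(\xi=0)=1-r$, $\mathbb{P}(\xi=k)=rp(1-p)^{k-1}$ ($k\ge1$): $H_i$ is the coalescent time of consecutive tips $i-1,i$ and the coalescent time of tips $i<j$ is $\max\{H_{i+1},\dots,H_j\}$. The CPP$(T)$ tree consists of tips $0,\dots,N_T-1$ with node depths $H_0=T,H_1,\dots,H_{N_T-1}$; $\mathbf{T}_k$ is the subtree spanned by a uniform sample of $k$ tips, $H_{k,i}$ being the coalescent time between the $(i-1)$-th and $i$-th sampled tips. An ultrametric oriented tree is identified with its sequence of node depths. The variable $H_y$ is the law of the coalescent time between consecutive sampled tips when each tip of the (infinite) CPP is sampled independently with probability $y$. *)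

theory Defs
  imports "HOL-Probability.Probability"
begin

definition Htail :: "real \<Rightarrow> real \<Rightarrow> nat \<Rightarrow> real" where
  "Htail p r n = (r - p) / ((1 - p) * (r / p) ^ n - (1 - r))"

definition Hprob :: "real \<Rightarrow> real \<Rightarrow> nat \<Rightarrow> real" where
  "Hprob p r n = (if n = 0 then 1 else Htail p r (n - 1)) - Htail p r n"

definition Hdist :: "real \<Rightarrow> real \<Rightarrow> nat pmf" where
  "Hdist p r = embed_pmf (Hprob p r)"

text \<open>The i.i.d. sequence: omega !! (i-1) is H_i for i >= 1, and H_0 = T.\<close>
definition Hseq :: "nat \<Rightarrow> nat stream \<Rightarrow> nat \<Rightarrow> nat" where
  "Hseq T \<omega> i = (if i = 0 then T else \<omega> !! (i - 1))"

definition NT :: "nat \<Rightarrow> nat stream \<Rightarrow> nat" where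
  "NT T \<omega> = (LEAST i. 1 \<le> i \<and> T < Hseq T \<omega> i)"

definition ksubsets :: "nat \<Rightarrow> nat \<Rightarrow> nat set set" where
  "ksubsets n k = {S. S \<subseteq> {..<n} \<and> card S = k}"

definition tip :: "nat set \<Rightarrow> nat \<Rightarrow> nat" where
  "tip S i = sorted_list_of_set S ! i"

definition sampled_depths :: "nat \<Rightarrow> nat stream \<Rightarrow> nat set \<Rightarrow> nat list" where
  "sampled_depths T \<omega> S =
     T # map (\<lambda>i. Max (Hseq T \<omega> ` {tip S (i - 1) + 1 .. tip S i})) [1..<card S]"

text \<open>P(T_k = d | N_T >= k): the k tips are chosen uniformly among the k-subsets of
  {0..N_T-1}, independently of (H_i) given N_T (law of total probability).\<close>
definition tree_cond_prob :: "real \<Rightarrow> real \<Rightarrow> nat \<Rightarrow> nat \<Rightarrow> nat list \<Rightarrow> real" where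
  "tree_cond_prob p r T k d =
     (let M = stream_space (measure_pmf (Hdist p r)) in
       (\<integral>\<omega>. (if k \<le> NT T \<omega>
              then pmf (map_pmf (sampled_depths T \<omega>) (pmf_of_set (ksubsets (NT T \<omega>) k))) d
              else 0) \<partial>M)
       / measure M {\<omega> \<in> space M. k \<le> NT T \<omega>})"

definition mu_dens :: "nat \<Rightarrow> real \<Rightarrow> real \<Rightarrow> real" where
  "mu_dens k \<delta> y = real k * \<delta> * y ^ (k - 1) / (1 - (1 - \<delta>) * (1 - y)) ^ (k + 1)"

definition Gcdf :: "real \<Rightarrow> real \<Rightarrow> nat \<Rightarrow> real \<Rightarrow> nat \<Rightarrow> real" where
  "Gcdf p r T y j =
     (if j = 0 then 0 else if T \<le> j then 1 else
       ((r / p) ^ j - 1) / ((r / p) ^ T - 1) *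
       ((r - p + y * (1 - p) * ((r / p) ^ T - 1)) / (r - p + y * (1 - p) * ((r / p) ^ j - 1))))"

definition Gprob :: "real \<Rightarrow> real \<Rightarrow> nat \<Rightarrow> real \<Rightarrow> nat \<Rightarrow> real" where
  "Gprob p r T y j = (if j = 0 then Gcdf p r T y 0 else Gcdf p r T y j - Gcdf p r T y (j - 1))"

definition mixture_prob :: "real \<Rightarrow> real \<Rightarrow> nat \<Rightarrow> nat \<Rightarrow> nat list \<Rightarrow> real" where
  "mixture_prob p r T k d =
     (if length d = k \<and> d ! 0 = T then
        (LINT y:{0<..<1}|lborel. mu_dens k (Htail p r T) y *
            (\<Prod>i\<in>{1..<k}. Gprob p r T y (d ! i)))
      else 0)"

definition Hytail :: "real \<Rightarrow> real \<Rightarrow> real \<Rightarrow> nat \<Rightarrow> real" where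
  "Hytail p r y n = (r - p) / (y * (1 - p) * (r / p) ^ n - (y * (1 - p) - (r - p)))"

definition Hyprob :: "real \<Rightarrow> real \<Rightarrow> real \<Rightarrow> nat \<Rightarrow> real" where
  "Hyprob p r y n = (if n = 0 then 1 else Hytail p r y (n - 1)) - Hytail p r y n"

end

theory Submission
  imports Defs
begin

text \<open>Cut the i.i.d. node depths at the sampled tips. For \<open>N\<^sub>T = n\<close> and sampled tips
  \<open>s\<^sub>0 < \<dots> < s\<^sub>k\<^sub>-\<^sub>1\<close>, the event that the sampled depths are \<open>T, x\<^sub>1, \<dots>, x\<^sub>k\<^sub>-\<^sub>1\<close> says: the
  \<open>a = s\<^sub>0\<close> depths before the first sampled tip are at most \<open>T\<close>, the blocks between consecutive
  sampled tips, of lengths \<open>g\<^sub>i = s\<^sub>i - s\<^sub>i\<^sub>-\<^sub>1\<close>, have maxima \<open>x\<^sub>i\<close>, the \<open>b = n - 1 - s\<^sub>k\<^sub>-\<^sub>1\<close>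
  depths after the last one are at most \<open>T\<close>, and the next depth exceeds \<open>T\<close>. By independence its
  probability is \<open>(1 - \<delta>)^a \<Prod>\<^sub>i (F(x\<^sub>i)^g\<^sub>i - F(x\<^sub>i - 1)^g\<^sub>i) (1 - \<delta>)^b \<delta>\<close>, where \<open>F\<close> is the
  distribution function of \<open>H\<close>. The uniform choice of the tips contributes
  \<open>1 / (n choose k) = \<integral>\<^sub>0\<^sup>1 k y^(k-1) (1 - y)^(n-k) dy\<close>. After exchanging sum and integral, the
  sums over \<open>a\<close>, over the gaps and over \<open>b\<close> are geometric series in \<open>1 - y\<close>; what remains is, up to
  the normalisation \<open>P(N\<^sub>T \<ge> k) = (1 - \<delta>)^(k-1)\<close>, the density of \<open>\<mu>\<^sub>k\<close> times a product of one
  and the same factor evaluated at each \<open>x\<^sub>i\<close>. Moebius algebra in \<open>m^n\<close> identifies that factor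
  with \<open>P(G\<^sub>i = x\<^sub>i | Y = y)\<close> and with \<open>P(H\<^sub>y = x\<^sub>i) / P(H\<^sub>y \<le> T)\<close>.\<close>

section \<open>Independent blocks of an i.i.d. stream\<close>

lemma sets_stream_space_pmf:
  fixes D :: "'a pmf"
  shows "sets (stream_space D) = sets (stream_space (count_space UNIV))"
  by (rule sets_stream_space_cong) simp

lemma measurable_stake_pmf_stream[measurable]:
  fixes D :: "'a::countable pmf"
  shows "stake m \<in> measurable (stream_space D) (count_space UNIV)"
  by (subst measurable_cong_sets[OF sets_stream_space_pmf refl]) (rule measurable_stake)

lemma measurable_snth_pmf_stream[measurable]:
  fixes D :: "'a pmf"
  shows "(\<lambda>\<omega>. \<omega> !! i) \<in> measurable (stream_space D) (count_space UNIV)"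
  using measurable_snth[of i "measure_pmf D"] by (simp add: measurable_cong_sets)

lemma prob_space_stream_space_pmf:
  fixes D :: "'a pmf"
  shows "prob_space (stream_space D)"
  by (rule prob_space.prob_space_stream_space[OF prob_space_measure_pmf])

lemma nn_integral_stream_space_pmf:
  fixes D :: "'a pmf"
  assumes "f \<in> borel_measurable (stream_space D)"
  shows "(\<integral>\<^sup>+\<omega>. f \<omega> \<partial>stream_space D) = (\<integral>\<^sup>+x. (\<integral>\<^sup>+\<omega>. f (x ## \<omega>) \<partial>stream_space D) \<partial>D)"
  using assms by (rule prob_space.nn_integral_stream_space[OF prob_space_measure_pmf])

lemma emeasure_space_stream_pmf[simp]:
  fixes D :: "'a pmf"
  shows "emeasure (stream_space D) (space (stream_space D)) = 1"
  by (rule prob_space.emeasure_space_1[OF prob_space_stream_space_pmf])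

lemma nn_integral_stream_stake_sdrop:
  fixes D :: "'a::countable pmf"
  assumes "h \<in> borel_measurable (stream_space D)"
  shows "(\<integral>\<^sup>+\<omega>. f (stake m \<omega>) * h (sdrop m \<omega>) \<partial>stream_space D)
    = (\<integral>\<^sup>+\<omega>. f (stake m \<omega>) \<partial>stream_space D) * (\<integral>\<^sup>+\<omega>. h \<omega> \<partial>stream_space D)"
proof (induction m arbitrary: f)
  case 0
  show ?case by (simp add: nn_integral_cmult assms)
next
  case (Suc m)
  have "(\<integral>\<^sup>+\<omega>. f (stake (Suc m) \<omega>) * h (sdrop (Suc m) \<omega>) \<partial>stream_space D)
      = (\<integral>\<^sup>+x. (\<integral>\<^sup>+\<omega>. f (x # stake m \<omega>) * h (sdrop m \<omega>) \<partial>stream_space D) \<partial>D)"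
    using assms by (subst nn_integral_stream_space_pmf) simp_all
  also have "\<dots> = (\<integral>\<^sup>+x. (\<integral>\<^sup>+\<omega>. f (x # stake m \<omega>) \<partial>stream_space D) \<partial>D) * (\<integral>\<^sup>+\<omega>. h \<omega> \<partial>stream_space D)"
    using Suc.IH[of "\<lambda>l. f (_ # l)"] by (simp add: nn_integral_multc)
  also have "(\<integral>\<^sup>+x. (\<integral>\<^sup>+\<omega>. f (x # stake m \<omega>) \<partial>stream_space D) \<partial>D)
      = (\<integral>\<^sup>+\<omega>. f (stake (Suc m) \<omega>) \<partial>stream_space D)"
    by (subst nn_integral_stream_space_pmf) simp_all
  finally show ?case .
qed

lemma nn_integral_stream_all_stake:
  fixes D :: "'a::countable pmf"
  shows "(\<integral>\<^sup>+\<omega>. of_bool (\<forall>v\<in>set (stake m \<omega>). v \<in> A) \<partial>stream_space D) = emeasure D A ^ m"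
proof (induction m)
  case 0
  show ?case by simp
next
  case (Suc m)
  have "(\<integral>\<^sup>+\<omega>. of_bool (\<forall>v\<in>set (stake (Suc m) \<omega>). v \<in> A) \<partial>stream_space D)
      = (\<integral>\<^sup>+x. indicator A x * (\<integral>\<^sup>+\<omega>. of_bool (\<forall>v\<in>set (stake m \<omega>). v \<in> A) \<partial>stream_space D) \<partial>D)"
    by (subst nn_integral_stream_space_pmf)
       (simp_all add: of_bool_conj indicator_def nn_integral_cmult)
  then show ?case
    by (simp add: Suc.IH nn_integral_multc mult.commute)
qed

lemma nn_integral_stream_shd:
  fixes D :: "'a pmf"
  shows "(\<integral>\<^sup>+\<omega>. f (shd \<omega>) \<partial>stream_space D) = (\<integral>\<^sup>+x. f x \<partial>D)"
  by (subst nn_integral_stream_space_pmf) (simp_all add: measurable_compose[OF measurable_shd])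

lemma set_stake_eq_image: "set (stake n \<omega>) = (\<lambda>j. \<omega> !! j) ` {..<n}"
  by (induction n) (simp_all add: stake_Suc lessThan_Suc del: stake.simps(2))

lemma ball_set_stake_iff: "(\<forall>v\<in>set (stake n \<omega>). P v) \<longleftrightarrow> (\<forall>j<n. P (\<omega> !! j))"
  by (auto simp: set_stake_eq_image)

section \<open>The first exceedance and the sampled tips\<close>

lemma NT_eq_Suc_Least:
  assumes "\<exists>i. T < \<omega> !! i"
  shows "NT T \<omega> = Suc (LEAST j. T < \<omega> !! j)"
proof -
  obtain i where "T < \<omega> !! i" using assms by blast
  then show ?thesis
    unfolding NT_def using Least_Suc[of "\<lambda>i. 1 \<le> i \<and> T < Hseq T \<omega> i" "Suc i"]
    by (simp add: Hseq_def)
qed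

lemma Least_eq_iff_nat:
  fixes n :: nat
  assumes "\<exists>i. P i"
  shows "(LEAST j. P j) = n \<longleftrightarrow> (\<forall>j<n. \<not> P j) \<and> P n"
proof
  assume "(LEAST j. P j) = n"
  then show "(\<forall>j<n. \<not> P j) \<and> P n"
    using LeastI_ex[OF assms] not_less_Least[of _ P] by blast
next
  assume "(\<forall>j<n. \<not> P j) \<and> P n"
  then show "(LEAST j. P j) = n"
    by (intro Least_equality) (auto simp: not_less[symmetric])
qed

lemma le_Least_iff_nat:
  fixes n :: nat
  assumes "\<exists>i. P i"
  shows "n \<le> (LEAST j. P j) \<longleftrightarrow> (\<forall>j<n. \<not> P j)"
proof
  assume "n \<le> (LEAST j. P j)"
  then show "\<forall>j<n. \<not> P j" using not_less_Least[of _ P] by fastforce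
next
  assume "\<forall>j<n. \<not> P j"
  then show "n \<le> (LEAST j. P j)" using LeastI_ex[OF assms] not_le by blast
qed

lemma NT_eq_Suc_iff:
  assumes "\<exists>i. T < \<omega> !! i"
  shows "NT T \<omega> = Suc n \<longleftrightarrow> (\<forall>j<n. \<omega> !! j \<le> T) \<and> T < \<omega> !! n"
  using assms by (simp add: NT_eq_Suc_Least Least_eq_iff_nat not_less)

lemma le_NT_iff:
  assumes "\<exists>i. T < \<omega> !! i"
  shows "Suc n \<le> NT T \<omega> \<longleftrightarrow> (\<forall>j<n. \<omega> !! j \<le> T)"
  using assms by (simp add: NT_eq_Suc_Least le_Least_iff_nat not_less)

lemma measurable_NT[measurable]:
  "NT T \<in> measurable (stream_space (measure_pmf D)) (count_space UNIV)"
proof -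
  have "(\<lambda>\<omega>. 1 \<le> i \<and> T < Hseq T \<omega> i) \<in> measurable (stream_space (measure_pmf D)) (count_space UNIV)" for i
    by (cases i) (simp_all add: Hseq_def)
  then show ?thesis unfolding NT_def[abs_def] by (rule measurable_Least)
qed

fun tips_of_gaps :: "nat \<Rightarrow> nat list \<Rightarrow> nat list" where
  "tips_of_gaps a [] = [a]"
| "tips_of_gaps a (g # gs) = a # tips_of_gaps (a + g) gs"

fun gaps :: "nat list \<Rightarrow> nat list" where
  "gaps (x # y # l) = (y - x) # gaps (y # l)"
| "gaps _ = []"

definition positive_lists :: "nat \<Rightarrow> nat list set" where
  "positive_lists K = {gs. length gs = K \<and> (\<forall>g\<in>set gs. 0 < g)}"

text \<open>A set of \<open>K + 1\<close> sampled tips among \<open>n\<close> tips is encoded by \<open>(a, gs, b)\<close>: the first sampled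
  tip \<open>a\<close>, the gaps \<open>gs\<close> between consecutive sampled tips and the number \<open>b\<close> of tips after the
  last sampled one.\<close>
definition gap_configs :: "nat \<Rightarrow> (nat \<times> nat list \<times> nat) set" where
  "gap_configs K = UNIV \<times> positive_lists K \<times> UNIV"

definition tip_config :: "nat \<times> nat list \<times> nat \<Rightarrow> nat \<times> nat set" where
  "tip_config = (\<lambda>(a, gs, b). (a + sum_list gs + b + 1, set (tips_of_gaps a gs)))"

lemma length_le_sum_list_positive: "\<forall>g\<in>set gs. 0 < g \<Longrightarrow> length gs \<le> sum_list (gs :: nat list)"
  by (induction gs) auto

lemma mem_gap_configs_iff [simp]:
  "(a, gs, b) \<in> gap_configs K \<longleftrightarrow> length gs = K \<and> (\<forall>g\<in>set gs. 0 < g)"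
  by (simp add: gap_configs_def positive_lists_def)

lemma length_tips_of_gaps [simp]: "length (tips_of_gaps a gs) = Suc (length gs)"
  by (induction gs arbitrary: a) auto

lemma tips_of_gaps_nth: "i \<le> length gs \<Longrightarrow> tips_of_gaps a gs ! i = a + sum_list (take i gs)"
  by (induction gs arbitrary: a i) (auto simp: nth_Cons split: nat.split)

lemma tips_of_gaps_ge: "v \<in> set (tips_of_gaps a gs) \<Longrightarrow> a \<le> v"
  by (induction gs arbitrary: a) force+

lemma tips_of_gaps_le: "v \<in> set (tips_of_gaps a gs) \<Longrightarrow> v \<le> a + sum_list gs"
  by (induction gs arbitrary: a) force+

lemma last_tip_in_tips_of_gaps: "a + sum_list gs \<in> set (tips_of_gaps a gs)"
  using nth_mem[of "length gs" "tips_of_gaps a gs"] by (simp add: tips_of_gaps_nth)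

lemma strict_sorted_tips_of_gaps: "\<forall>g\<in>set gs. 0 < g \<Longrightarrow> sorted_wrt (<) (tips_of_gaps a gs)"
proof (induction gs arbitrary: a)
  case (Cons g gs)
  then show ?case using tips_of_gaps_ge[of _ "a + g" gs] by fastforce
qed simp

lemma sorted_list_of_set_tips_of_gaps:
  "\<forall>g\<in>set gs. 0 < g \<Longrightarrow> sorted_list_of_set (set (tips_of_gaps a gs)) = tips_of_gaps a gs"
  using strict_sorted_tips_of_gaps by (simp add: sorted_list_of_set.idem_if_sorted_distinct strict_sorted_iff)

lemma card_set_tips_of_gaps: "\<forall>g\<in>set gs. 0 < g \<Longrightarrow> card (set (tips_of_gaps a gs)) = Suc (length gs)"
  using strict_sorted_tips_of_gaps[of gs a] by (simp add: strict_sorted_iff distinct_card)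

lemma tips_of_gaps_neq_Nil [simp]: "tips_of_gaps a gs \<noteq> []"
  by (cases gs) simp_all

lemma tips_of_gaps_inject: "tips_of_gaps a gs = tips_of_gaps a' gs' \<Longrightarrow> a = a' \<and> gs = gs'"
proof (induction gs arbitrary: a a' gs')
  case Nil
  then show ?case by (cases gs') (auto simp: eq_commute[of "[]"])
next
  case (Cons g gs)
  show ?case
  proof (cases gs')
    case (Cons g' l)
    then have "a = a'" "tips_of_gaps (a + g) gs = tips_of_gaps (a' + g') l"
      using Cons.prems by auto
    then show ?thesis using Cons.IH[of "a + g" "a' + g'" l] Cons by auto
  qed (use Cons.prems in \<open>simp add: eq_commute[of "[]"]\<close>)
qed

lemma tips_of_gaps_gaps: "sorted_wrt (<) (x # l) \<Longrightarrow> tips_of_gaps x (gaps (x # l)) = x # l"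
  by (induction l arbitrary: x) auto

lemma gaps_in_positive_lists: "sorted_wrt (<) (x # l) \<Longrightarrow> gaps (x # l) \<in> positive_lists (length l)"
  unfolding positive_lists_def by (induction l arbitrary: x) auto

lemma inj_on_tip_config: "inj_on tip_config (gap_configs K)"
proof (rule inj_onI)
  fix x y assume x: "x \<in> gap_configs K" and y: "y \<in> gap_configs K" and eq: "tip_config x = tip_config y"
  obtain a gs b a' gs' b' where xy: "x = (a, gs, b)" "y = (a', gs', b')"
    by (cases x, cases y)
  have pos: "\<forall>g\<in>set gs. 0 < g" "\<forall>g\<in>set gs'. 0 < g"
    using x y unfolding xy by simp_all
  have "set (tips_of_gaps a gs) = set (tips_of_gaps a' gs')"
    using eq by (simp add: xy tip_config_def)
  then have "tips_of_gaps a gs = tips_of_gaps a' gs'"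
    by (metis sorted_list_of_set_tips_of_gaps[OF pos(1)] sorted_list_of_set_tips_of_gaps[OF pos(2)])
  then have "a = a' \<and> gs = gs'"
    by (rule tips_of_gaps_inject)
  then show "x = y"
    using eq by (simp add: xy tip_config_def)
qed

lemma tip_config_in_ksubsets:
  assumes "1 \<le> k" and x: "x \<in> gap_configs (k - 1)"
  shows "tip_config x \<in> {(n, S). S \<in> ksubsets n k}"
proof -
  obtain a gs b where x_eq: "x = (a, gs, b)" by (cases x)
  have gs: "length gs = k - 1" "\<forall>g\<in>set gs. 0 < g"
    using x unfolding x_eq by simp_all
  have "set (tips_of_gaps a gs) \<subseteq> {..< a + sum_list gs + b + 1}"
    using tips_of_gaps_le by fastforce
  moreover have "card (set (tips_of_gaps a gs)) = k"
    using card_set_tips_of_gaps[OF gs(2)] gs(1) assms(1) by simp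
  ultimately show ?thesis
    by (simp add: x_eq tip_config_def ksubsets_def)
qed

lemma ksubsets_in_image_tip_config:
  assumes "1 \<le> k" and "S \<in> ksubsets n k"
  shows "(n, S) \<in> tip_config ` gap_configs (k - 1)"
proof -
  have S: "S \<subseteq> {..<n}" "card S = k" "finite S"
    using assms(2) finite_subset by (auto simp: ksubsets_def)
  then have "length (sorted_list_of_set S) = k"
    by simp
  then obtain x l where xl: "sorted_list_of_set S = x # l" "length l = k - 1"
    using assms(1) by (cases "sorted_list_of_set S") auto
  have sorted: "sorted_wrt (<) (x # l)"
    using strict_sorted_list_of_set[of S] by (simp only: xl)
  have set_xl: "set (x # l) = S"
    using set_sorted_list_of_set[OF S(3)] by (simp only: xl)
  let ?gs = "gaps (x # l)"
  have tips: "tips_of_gaps x ?gs = x # l"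
    using sorted by (rule tips_of_gaps_gaps)
  have "x + sum_list ?gs \<in> S"
    using last_tip_in_tips_of_gaps[of x ?gs] by (simp only: tips set_xl)
  then have "x + sum_list ?gs < n"
    using S(1) by auto
  then have "(n, S) = tip_config (x, ?gs, n - 1 - (x + sum_list ?gs))"
    using tips set_xl by (simp add: tip_config_def)
  moreover have "(x, ?gs, n - 1 - (x + sum_list ?gs)) \<in> gap_configs (k - 1)"
    using gaps_in_positive_lists[OF sorted] xl by (simp add: positive_lists_def)
  ultimately show ?thesis
    by (rule image_eqI)
qed

lemma bij_betw_tip_config:
  assumes "1 \<le> k"
  shows "bij_betw tip_config (gap_configs (k - 1)) {(n, S). S \<in> ksubsets n k}"
  unfolding bij_betw_def
proof
  show "tip_config ` gap_configs (k - 1) = {(n, S). S \<in> ksubsets n k}"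
  proof
    show "tip_config ` gap_configs (k - 1) \<subseteq> {(n, S). S \<in> ksubsets n k}"
      using tip_config_in_ksubsets[OF assms] by (rule image_subsetI)
    show "{(n, S). S \<in> ksubsets n k} \<subseteq> tip_config ` gap_configs (k - 1)"
      by clarify (rule ksubsets_in_image_tip_config[OF assms])
  qed
qed (rule inj_on_tip_config)

fun blocks_event :: "nat \<Rightarrow> nat list \<Rightarrow> nat list \<Rightarrow> nat \<Rightarrow> nat stream \<Rightarrow> bool" where
  "blocks_event T [] [] b \<omega> \<longleftrightarrow> (\<forall>v\<in>set (stake b \<omega>). v \<le> T) \<and> T < \<omega> !! b"
| "blocks_event T (g # gs) (x # xs) b \<omega> \<longleftrightarrow>
     x \<le> T \<and> Max (set (stake g \<omega>)) = x \<and> blocks_event T gs xs b (sdrop g \<omega>)"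
| "blocks_event T _ _ b \<omega> \<longleftrightarrow> False"

fun config_event :: "nat \<Rightarrow> nat \<times> nat list \<times> nat \<Rightarrow> nat list \<Rightarrow> nat stream \<Rightarrow> bool" where
  "config_event T (a, gs, b) xs \<omega> \<longleftrightarrow>
     (\<forall>v\<in>set (stake a \<omega>). v \<le> T) \<and> blocks_event T gs xs b (sdrop a \<omega>)"

lemma Max_stake_le_iff:
  assumes "0 < g"
  shows "Max (set (stake g \<omega>)) \<le> T \<longleftrightarrow> (\<forall>j<g. \<omega> !! j \<le> T)"
proof -
  have "{..<g} \<noteq> {}" using assms by auto
  then show ?thesis by (auto simp: set_stake_eq_image)
qed

lemma all_less_add_iff:
  fixes g n :: nat
  shows "(\<forall>j<g + n. P j) \<longleftrightarrow> (\<forall>j<g. P j) \<and> (\<forall>j<n. P (g + j))"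
  by (metis add_diff_inverse_nat nat_add_left_cancel_less trans_less_add1)

lemma blocks_event_iff:
  assumes "length gs = length xs" "\<forall>g\<in>set gs. 0 < g"
  shows "blocks_event T gs xs b \<omega> \<longleftrightarrow>
    (\<forall>j < sum_list gs + b. \<omega> !! j \<le> T) \<and> T < \<omega> !! (sum_list gs + b) \<and>
    (\<forall>i<length gs. Max (set (stake (gs ! i) (sdrop (sum_list (take i gs)) \<omega>))) = xs ! i)"
  using assms
proof (induction gs xs arbitrary: \<omega> rule: list_induct2)
  case Nil
  then show ?case by (simp add: ball_set_stake_iff)
next
  case (Cons g gs x xs)
  then have g: "0 < g" and IH: "blocks_event T gs xs b (sdrop g \<omega>) \<longleftrightarrow>
    (\<forall>j < sum_list gs + b. \<omega> !! (g + j) \<le> T) \<and> T < \<omega> !! (g + (sum_list gs + b)) \<and>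
    (\<forall>i<length gs. Max (set (stake (gs ! i) (sdrop (g + sum_list (take i gs)) \<omega>))) = xs ! i)"
    by (simp_all add: sdrop_snth)
  have "(\<forall>i<Suc (length gs). Max (set (stake ((g # gs) ! i) (sdrop (sum_list (take i (g # gs))) \<omega>))) = (x # xs) ! i)
    \<longleftrightarrow> Max (set (stake g \<omega>)) = x \<and>
      (\<forall>i<length gs. Max (set (stake (gs ! i) (sdrop (g + sum_list (take i gs)) \<omega>))) = xs ! i)"
    unfolding All_less_Suc2 by simp
  then show ?case
    unfolding blocks_event.simps IH sum_list.Cons length_Cons add.assoc all_less_add_iff
    using Max_stake_le_iff[OF g, of \<omega> T] by auto
qed

lemma image_Hseq_block: "Hseq T \<omega> ` {t + 1 .. t + g} = set (stake g (sdrop t \<omega>))"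
  unfolding set_stake_eq_image sdrop_snth
proof (intro equalityI subsetI)
  fix v assume "v \<in> Hseq T \<omega> ` {t + 1 .. t + g}"
  then obtain i where i: "t + 1 \<le> i" "i \<le> t + g" "v = Hseq T \<omega> i" by auto
  then have "v = \<omega> !! (t + (i - Suc t))" "i - Suc t < g" by (auto simp: Hseq_def)
  then show "v \<in> (\<lambda>j. \<omega> !! (t + j)) ` {..<g}" by blast
next
  fix v assume "v \<in> (\<lambda>j. \<omega> !! (t + j)) ` {..<g}"
  then obtain j where j: "j < g" "v = \<omega> !! (t + j)" by auto
  then have "v = Hseq T \<omega> (Suc (t + j))" "Suc (t + j) \<in> {t + 1 .. t + g}" by (auto simp: Hseq_def)
  then show "v \<in> Hseq T \<omega> ` {t + 1 .. t + g}" by blast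
qed

lemma sampled_depths_tips_of_gaps_iff:
  assumes gs: "length gs = K" "\<forall>g\<in>set gs. 0 < g" and xs: "length xs = K"
  shows "sampled_depths T \<omega> (set (tips_of_gaps a gs)) = T # xs \<longleftrightarrow>
    (\<forall>i<K. Max (set (stake (gs ! i) (sdrop (a + sum_list (take i gs)) \<omega>))) = xs ! i)"
proof -
  define S where "S = set (tips_of_gaps a gs)"
  have card_S: "card S = Suc K"
    using card_set_tips_of_gaps[OF gs(2)] gs(1) by (simp add: S_def)
  have tip: "tip S i = a + sum_list (take i gs)" if "i \<le> K" for i
    using that gs by (simp add: tip_def S_def sorted_list_of_set_tips_of_gaps tips_of_gaps_nth)
  have block: "Hseq T \<omega> ` {tip S i + 1 .. tip S (Suc i)}
      = set (stake (gs ! i) (sdrop (a + sum_list (take i gs)) \<omega>))" if "i < K" for i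
    using tip[of i] tip[of "Suc i"] that gs(1) image_Hseq_block[of T \<omega> "a + sum_list (take i gs)" "gs ! i"]
    by (simp add: take_Suc_conv_app_nth add.assoc)
  have "sampled_depths T \<omega> S = T # xs \<longleftrightarrow>
      (\<forall>i<K. Max (Hseq T \<omega> ` {tip S i + 1 .. tip S (Suc i)}) = xs ! i)"
    unfolding sampled_depths_def card_S list.inject
    using xs by (simp add: list_eq_iff_nth_eq del: upt_Suc)
  also have "\<dots> \<longleftrightarrow> (\<forall>i<K. Max (set (stake (gs ! i) (sdrop (a + sum_list (take i gs)) \<omega>))) = xs ! i)"
    using block by simp
  finally show ?thesis
    unfolding S_def .
qed

lemma config_event_iff:
  assumes x: "x \<in> gap_configs K" and xs: "length xs = K" and exceeds: "\<exists>i. T < \<omega> !! i"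
  shows "NT T \<omega> = fst (tip_config x) \<and> sampled_depths T \<omega> (snd (tip_config x)) = T # xs
    \<longleftrightarrow> config_event T x xs \<omega>"
proof -
  obtain a gs b where x_eq: "x = (a, gs, b)" by (cases x)
  have gs: "length gs = K" "\<forall>g\<in>set gs. 0 < g"
    using x by (simp_all add: x_eq)
  have "config_event T x xs \<omega> \<longleftrightarrow>
      (\<forall>j < a + (sum_list gs + b). \<omega> !! j \<le> T) \<and> T < \<omega> !! (a + (sum_list gs + b)) \<and>
      (\<forall>i<K. Max (set (stake (gs ! i) (sdrop (a + sum_list (take i gs)) \<omega>))) = xs ! i)"
    using blocks_event_iff[of gs xs T b "sdrop a \<omega>"] gs xs
    by (simp add: x_eq all_less_add_iff ball_set_stake_iff sdrop_snth)
  moreover have "tip_config x = (Suc (a + (sum_list gs + b)), set (tips_of_gaps a gs))"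
    by (simp add: x_eq tip_config_def)
  ultimately show ?thesis
    using NT_eq_Suc_iff[OF exceeds] sampled_depths_tips_of_gaps_iff[OF gs xs, of T \<omega> a] by simp
qed

lemma finite_ksubsets: "finite (ksubsets n k)"
  unfolding ksubsets_def by (rule finite_subset[of _ "Pow {..<n}"]) auto

lemma card_ksubsets: "card (ksubsets n k) = n choose k"
  unfolding ksubsets_def using n_subsets[of "{..<n}" k] by simp

lemma ksubsets_eq_empty_iff: "ksubsets n k = {} \<longleftrightarrow> n < k"
proof -
  have "ksubsets n k = {} \<longleftrightarrow> card (ksubsets n k) = 0"
    using finite_ksubsets[of n k] by simp
  then show ?thesis by (simp add: card_ksubsets)
qed

lemma sampled_depths_stake:
  assumes "S \<subseteq> {..<n}"
  shows "sampled_depths T \<omega> S = sampled_depths T (stake n \<omega> @- sconst 0) S"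
proof -
  have tip_less: "tip S i < n" if "i < card S" for i
    using assms that nth_mem[of i "sorted_list_of_set S"] finite_subset[OF assms]
    by (auto simp: tip_def)
  have "Hseq T \<omega> j = Hseq T (stake n \<omega> @- sconst 0) j" if "j \<le> tip S i" "i < card S" for i j
    using that tip_less[of i] by (simp add: Hseq_def)
  then show ?thesis
    unfolding sampled_depths_def
    by (intro arg_cong[where f = "(#) T"] map_cong arg_cong[where f = Max] image_cong) auto
qed

lemma fst_tip_config_ge:
  assumes "x \<in> gap_configs K"
  shows "K + 1 \<le> fst (tip_config x)"
proof -
  obtain a gs b where x: "x = (a, gs, b)" by (cases x)
  then have "length gs = K" "length gs \<le> sum_list gs"
    using assms length_le_sum_list_positive[of gs] by simp_all
  then show ?thesis by (simp add: x tip_config_def)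
qed

section \<open>The linear fractional coalescent point process\<close>

locale linear_fractional_cpp =
  fixes p r :: real and T :: nat
  assumes p_pos: "0 < p" and p_less_1: "p < 1" and r_le_1: "r \<le> 1"
    and supercritical: "r / p > 1" and T_pos: "1 \<le> T"
begin

abbreviation "M \<equiv> stream_space (measure_pmf (Hdist p r))"
abbreviation "\<delta> \<equiv> Htail p r T"
abbreviation "Hcdf n \<equiv> 1 - Htail p r n"

text \<open>All explicit laws of the statement are Moebius functions of \<open>u n = (1 - p)(m\<^sup>n - 1)\<close>;
  e.g. \<open>P(H > n) = (r - p) / (u n + (r - p))\<close>.\<close>
definition u :: "nat \<Rightarrow> real" where
  "u n = (1 - p) * ((r / p) ^ n - 1)"

lemma r_minus_p_pos: "r - p > 0"
  using supercritical p_pos by (simp add: field_simps)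

lemma u_nonneg: "u n \<ge> 0"
  using supercritical p_less_1 by (simp add: u_def)

lemma u_pos: "n > 0 \<Longrightarrow> u n > 0"
  using supercritical p_less_1 by (simp add: u_def)

lemma u_mono: "i \<le> j \<Longrightarrow> u i \<le> u j"
  unfolding u_def using p_less_1 supercritical
  by (intro mult_left_mono) (auto intro: power_increasing)

lemma Htail_eq: "Htail p r n = (r - p) / (u n + (r - p))"
  unfolding Htail_def u_def by (simp add: algebra_simps)

lemma Htail_0 [simp]: "Htail p r 0 = 1"
  using r_minus_p_pos by (simp add: Htail_eq u_def)

lemma Htail_pos: "Htail p r n > 0"
  using r_minus_p_pos u_nonneg[of n] by (simp add: Htail_eq)

lemma Htail_le_1: "Htail p r n \<le> 1"
  using r_minus_p_pos u_nonneg[of n] by (simp add: Htail_eq)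

lemma Htail_less_1: "n > 0 \<Longrightarrow> Htail p r n < 1"
  using r_minus_p_pos u_pos[of n] by (simp add: Htail_eq)

lemma Htail_antimono: "i \<le> j \<Longrightarrow> Htail p r j \<le> Htail p r i"
  using r_minus_p_pos u_nonneg[of i] u_mono[of i j] by (simp add: Htail_eq frac_le)

lemma Htail_tendsto_0: "Htail p r \<longlonglongrightarrow> 0"
proof -
  have "filterlim (\<lambda>n. (r / p) ^ n) at_top sequentially"
    using supercritical by (simp add: Archimedean_eventually_pow filterlim_at_top_dense)
  then have "filterlim (\<lambda>n. (1 - p) * (r / p) ^ n) at_top sequentially"
    using p_less_1 by (intro filterlim_tendsto_pos_mult_at_top[OF tendsto_const]) simp_all
  then have "filterlim (\<lambda>n. - (1 - r) + (1 - p) * (r / p) ^ n) at_top sequentially"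
    by (rule filterlim_tendsto_add_at_top[OF tendsto_const])
  then have "filterlim (\<lambda>n. (1 - p) * (r / p) ^ n - (1 - r)) at_top sequentially"
    by (simp add: algebra_simps)
  then show ?thesis
    unfolding Htail_def[abs_def]
    by (intro tendsto_divide_0[OF tendsto_const] filterlim_at_top_imp_at_infinity) simp
qed

lemma Hcdf_mono: "i \<le> j \<Longrightarrow> Hcdf i \<le> Hcdf j"
  using Htail_antimono by simp

lemma Hcdf_nonneg: "Hcdf n \<ge> 0"
  using Htail_le_1 by simp

lemma Hcdf_le_1: "Hcdf n \<le> 1"
  using Htail_pos[of n] by simp

lemma Hprob_nonneg: "Hprob p r n \<ge> 0"
  unfolding Hprob_def using Htail_antimono[of "n - 1" n] by auto

lemma sum_Hprob_atMost: "(\<Sum>i\<le>n. Hprob p r i) = Hcdf n"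
  by (induction n) (auto simp: Hprob_def)

lemma Hprob_sums: "Hprob p r sums 1"
proof -
  have "(\<lambda>n. \<Sum>i\<le>n. Hprob p r i) \<longlonglongrightarrow> 1 - 0"
    unfolding sum_Hprob_atMost by (intro tendsto_diff tendsto_const Htail_tendsto_0)
  then show ?thesis unfolding sums_def_le by simp
qed

lemma pmf_Hdist: "pmf (Hdist p r) n = Hprob p r n"
proof -
  have "(\<integral>\<^sup>+x. ennreal (Hprob p r x) \<partial>count_space UNIV) = 1"
    unfolding nn_integral_count_space_nat
    using suminf_ennreal_eq[OF Hprob_nonneg Hprob_sums] by simp
  then show ?thesis
    unfolding Hdist_def by (subst pmf_embed_pmf) (auto simp: Hprob_nonneg)
qed

lemma emeasure_Hdist_atMost: "emeasure (Hdist p r) {..n} = Hcdf n"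
  by (simp add: measure_pmf.emeasure_eq_measure measure_measure_pmf_finite pmf_Hdist sum_Hprob_atMost)

lemma emeasure_Hdist_greaterThan: "emeasure (Hdist p r) {n<..} = Htail p r n"
proof -
  have "measure (Hdist p r) {n<..} = 1 - measure (Hdist p r) {..n}"
    by (subst measure_pmf.prob_compl[symmetric]) (auto intro!: arg_cong[where f="measure _"])
  then show ?thesis
    by (simp add: measure_pmf.emeasure_eq_measure measure_measure_pmf_finite pmf_Hdist sum_Hprob_atMost)
qed

lemma delta_pos: "\<delta> > 0"
  by (rule Htail_pos)

lemma delta_less_1: "\<delta> < 1"
  using T_pos by (intro Htail_less_1) simp

lemma nn_integral_all_stake_le:
  "(\<integral>\<^sup>+\<omega>. of_bool (\<forall>v\<in>set (stake m \<omega>). v \<le> n) \<partial>M) = ennreal (Hcdf n ^ m)"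
  using nn_integral_stream_all_stake[where D = "Hdist p r" and m = m and A = "{..n}"] Hcdf_nonneg[of n]
  by (simp add: emeasure_Hdist_atMost ennreal_power)

lemma emeasure_M_eq_measure: "emeasure M A = ennreal (measure M A)"
  using prob_space.finite_measure[OF prob_space_stream_space_pmf]
  by (rule finite_measure.emeasure_eq_measure)

lemma AE_exceeds_T: "AE \<omega> in M. \<exists>i. T < \<omega> !! i"
proof -
  let ?A = "{\<omega> \<in> space M. \<not> (\<exists>i. T < \<omega> !! i)}"
  have A: "?A \<in> sets M" by measurable
  have "measure M ?A \<le> (1 - \<delta>) ^ m" for m
  proof -
    have "emeasure M ?A \<le> (\<integral>\<^sup>+\<omega>. of_bool (\<forall>v\<in>set (stake m \<omega>). v \<le> T) \<partial>M)"
      unfolding nn_integral_indicator[OF A, symmetric]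
      by (intro nn_integral_mono) (auto simp: indicator_def ball_set_stake_iff not_less)
    then show ?thesis
      using delta_less_1 by (simp add: nn_integral_all_stake_le emeasure_M_eq_measure)
  qed
  moreover have "(\<lambda>m. (1 - \<delta>) ^ m) \<longlonglongrightarrow> 0"
    using delta_less_1 delta_pos by (intro LIMSEQ_realpow_zero) auto
  ultimately have "measure M ?A \<le> 0"
    by (intro LIMSEQ_le_const) auto
  then have "measure M ?A = 0"
    by (simp add: measure_le_0_iff)
  then show ?thesis
    using A by (intro AE_I[where N = "?A"]) (auto simp: emeasure_M_eq_measure)
qed

lemma prob_NT_ge:
  assumes "1 \<le> k"
  shows "measure M {\<omega> \<in> space M. k \<le> NT T \<omega>} = (1 - \<delta>) ^ (k - 1)"
proof -
  let ?B = "{\<omega> \<in> space M. \<forall>v\<in>set (stake (k - 1) \<omega>). v \<le> T}"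
  have "k \<le> NT T \<omega> \<longleftrightarrow> (\<forall>v\<in>set (stake (k - 1) \<omega>). v \<le> T)" if "\<exists>i. T < \<omega> !! i" for \<omega>
    using le_NT_iff[OF that, of "k - 1"] assms by (simp add: ball_set_stake_iff)
  then have "measure M {\<omega> \<in> space M. k \<le> NT T \<omega>} = measure M ?B"
    by (intro measure_eq_AE) (use AE_exceeds_T in \<open>auto elim!: eventually_mono\<close>)
  also have "emeasure M ?B = (\<integral>\<^sup>+\<omega>. of_bool (\<forall>v\<in>set (stake (k - 1) \<omega>). v \<le> T) \<partial>M)"
  proof -
    have "?B \<in> sets M" by measurable
    then show ?thesis
      by (simp add: nn_integral_indicator[symmetric] indicator_def space_stream_space cong: nn_integral_cong)
  qed
  then have "measure M ?B = (1 - \<delta>) ^ (k - 1)"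
    using delta_less_1 by (simp add: nn_integral_all_stake_le emeasure_M_eq_measure)
  finally show ?thesis .
qed

definition block_max_prob :: "nat \<Rightarrow> nat \<Rightarrow> real" where
  "block_max_prob g x = (if x \<le> T then Hcdf x ^ g - Hcdf (x - 1) ^ g else 0)"

lemma block_max_prob_nonneg: "block_max_prob g x \<ge> 0"
  unfolding block_max_prob_def using Hcdf_mono[of "x - 1" x] Hcdf_nonneg[of "x - 1"]
  by (auto intro!: power_mono)

lemma nn_integral_block_max:
  assumes "0 < g"
  shows "(\<integral>\<^sup>+\<omega>. of_bool (x \<le> T \<and> Max (set (stake g \<omega>)) = x) \<partial>M) = block_max_prob g x"
proof (cases "x \<le> T")
  case False
  then show ?thesis by (simp add: block_max_prob_def)
next
  case True
  have Max_le_iff: "Max (set (stake g \<omega>)) \<le> y \<longleftrightarrow> (\<forall>v\<in>set (stake g \<omega>). v \<le> y)"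
    for \<omega> :: "nat stream" and y
    using assms by (subst Max_le_iff) auto
  show ?thesis
  proof (cases x)
    case 0
    have "(\<integral>\<^sup>+\<omega>. of_bool (x \<le> T \<and> Max (set (stake g \<omega>)) = x) \<partial>M)
        \<le> (\<integral>\<^sup>+\<omega>. of_bool (\<forall>v\<in>set (stake g \<omega>). v \<le> 0) \<partial>M)"
      by (intro nn_integral_mono) (force simp: 0 dest: Max_ge[OF finite_set])
    also have "\<dots> = 0"
      unfolding nn_integral_all_stake_le using assms by simp
    finally show ?thesis
      using assms by (simp add: 0 block_max_prob_def)
  next
    case (Suc x')
    let ?I = "\<integral>\<^sup>+\<omega>. of_bool (x \<le> T \<and> Max (set (stake g \<omega>)) = x) \<partial>M"
    have "of_bool (\<forall>v\<in>set (stake g \<omega>). v \<le> x) =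
        of_bool (x \<le> T \<and> Max (set (stake g \<omega>)) = x) + (of_bool (\<forall>v\<in>set (stake g \<omega>). v \<le> x') :: ennreal)"
      for \<omega>
      using True by (auto simp: Max_le_iff[symmetric] Suc)
    then have "(\<integral>\<^sup>+\<omega>. of_bool (\<forall>v\<in>set (stake g \<omega>). v \<le> x) \<partial>M)
        = ?I + (\<integral>\<^sup>+\<omega>. of_bool (\<forall>v\<in>set (stake g \<omega>). v \<le> x') \<partial>M)"
      by (simp add: nn_integral_add)
    then have "ennreal (Hcdf x ^ g) = ?I + ennreal (Hcdf x' ^ g)"
      by (simp only: nn_integral_all_stake_le)
    then have "?I = ennreal (Hcdf x ^ g) - ennreal (Hcdf x' ^ g)"
      by simp
    also have "\<dots> = ennreal (Hcdf x ^ g - Hcdf x' ^ g)"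
      using Hcdf_nonneg[of x'] by (subst ennreal_minus) auto
    finally show ?thesis
      using True by (simp add: Suc block_max_prob_def)
  qed
qed

lemma nn_integral_exceeds_shd: "(\<integral>\<^sup>+\<omega>. of_bool (T < shd \<omega>) \<partial>M) = \<delta>"
proof -
  have "(\<integral>\<^sup>+\<omega>. of_bool (T < shd \<omega>) \<partial>M) = (\<integral>\<^sup>+x. indicator {T<..} x \<partial>Hdist p r)"
    using nn_integral_stream_shd[where f = "indicator {T<..}" and D = "Hdist p r"]
    by (simp add: indicator_def)
  also have "\<dots> = \<delta>"
    by (simp add: emeasure_Hdist_greaterThan)
  finally show ?thesis .
qed

lemma measurable_blocks_event[measurable]: "Measurable.pred M (blocks_event T gs xs b)"
proof (induction gs xs rule: list_induct2')
  case 1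
  have "blocks_event T [] [] b = (\<lambda>\<omega>. (\<lambda>l. (\<forall>v\<in>set (butlast l). v \<le> T) \<and> T < last l) (stake (Suc b) \<omega>))"
    by (simp add: fun_eq_iff stake_Suc del: stake.simps(2))
  then show ?case by simp
next
  case (2 g gs)
  have "blocks_event T (g # gs) [] b = (\<lambda>_. False)" by (simp add: fun_eq_iff)
  then show ?case by simp
next
  case (3 x xs)
  have "blocks_event T [] (x # xs) b = (\<lambda>_. False)" by (simp add: fun_eq_iff)
  then show ?case by simp
next
  case (4 g gs x xs)
  have "Measurable.pred M (\<lambda>\<omega>. (\<lambda>l. Max (set l) = x) (stake g \<omega>))"
    by measurable
  then show ?case using "4.IH" by simp
qed

lemma measurable_config_event[measurable]: "Measurable.pred M (config_event T x xs)"
proof -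
  obtain a gs b where x: "x = (a, gs, b)" by (cases x)
  have "config_event T x xs
      = (\<lambda>\<omega>. (\<lambda>l. \<forall>v\<in>set l. v \<le> T) (stake a \<omega>) \<and> blocks_event T gs xs b (sdrop a \<omega>))"
    by (simp add: x fun_eq_iff)
  then show ?thesis by simp
qed

lemma nn_integral_blocks_event:
  assumes "length gs = length xs" "\<forall>g\<in>set gs. 0 < g"
  shows "(\<integral>\<^sup>+\<omega>. of_bool (blocks_event T gs xs b \<omega>) \<partial>M)
    = ennreal (prod_list (map2 block_max_prob gs xs) * ((1 - \<delta>) ^ b * \<delta>))"
  using assms
proof (induction gs xs rule: list_induct2)
  case Nil
  have "(\<integral>\<^sup>+\<omega>. of_bool (blocks_event T [] [] b \<omega>) \<partial>M)
      = (\<integral>\<^sup>+\<omega>. of_bool (\<forall>v\<in>set (stake b \<omega>). v \<le> T) * of_bool (T < shd (sdrop b \<omega>)) \<partial>M)"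
    by (simp add: sdrop_snth of_bool_conj)
  also have "\<dots> = ennreal ((1 - \<delta>) ^ b) * ennreal \<delta>"
    by (subst nn_integral_stream_stake_sdrop) (simp_all add: nn_integral_all_stake_le nn_integral_exceeds_shd)
  finally show ?case
    using delta_less_1 by (simp add: ennreal_mult'[symmetric])
next
  case (Cons g gs x xs)
  then have "(\<integral>\<^sup>+\<omega>. of_bool (blocks_event T (g # gs) (x # xs) b \<omega>) \<partial>M)
      = (\<integral>\<^sup>+\<omega>. of_bool (x \<le> T \<and> Max (set (stake g \<omega>)) = x) * of_bool (blocks_event T gs xs b (sdrop g \<omega>)) \<partial>M)"
    by (simp add: of_bool_conj mult.assoc)
  also have "\<dots> = ennreal (block_max_prob g x) * ennreal (prod_list (map2 block_max_prob gs xs) * ((1 - \<delta>) ^ b * \<delta>))"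
    using Cons by (subst nn_integral_stream_stake_sdrop) (simp_all add: nn_integral_block_max)
  finally show ?case
    using block_max_prob_nonneg[of g x] by (simp add: ennreal_mult'[symmetric] mult.assoc)
qed

definition config_prob :: "nat list \<Rightarrow> nat \<times> nat list \<times> nat \<Rightarrow> real" where
  "config_prob xs = (\<lambda>(a, gs, b). (1 - \<delta>) ^ a * prod_list (map2 block_max_prob gs xs) * ((1 - \<delta>) ^ b * \<delta>))"

lemma config_prob_nonneg: "config_prob xs x \<ge> 0"
  using delta_less_1 delta_pos block_max_prob_nonneg
  by (auto simp: config_prob_def split: prod.split intro!: mult_nonneg_nonneg prod_list_nonneg)

lemma nn_integral_config_event:
  assumes "x \<in> gap_configs (length xs)"
  shows "(\<integral>\<^sup>+\<omega>. of_bool (config_event T x xs \<omega>) \<partial>M) = config_prob xs x"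
proof -
  obtain a gs b where x: "x = (a, gs, b)" by (cases x)
  have gs: "length gs = length xs" "\<forall>g\<in>set gs. 0 < g"
    using assms by (simp_all add: x)
  have "(\<integral>\<^sup>+\<omega>. of_bool (config_event T x xs \<omega>) \<partial>M)
      = (\<integral>\<^sup>+\<omega>. of_bool (\<forall>v\<in>set (stake a \<omega>). v \<le> T) * of_bool (blocks_event T gs xs b (sdrop a \<omega>)) \<partial>M)"
    by (simp add: x of_bool_conj)
  also have "\<dots> = ennreal ((1 - \<delta>) ^ a) * ennreal (prod_list (map2 block_max_prob gs xs) * ((1 - \<delta>) ^ b * \<delta>))"
    by (subst nn_integral_stream_stake_sdrop) (simp_all add: nn_integral_all_stake_le nn_integral_blocks_event[OF gs])
  finally show ?thesis
    using delta_less_1 by (simp add: x config_prob_def ennreal_mult'[symmetric] mult.assoc)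
qed

definition sample_prob :: "nat \<Rightarrow> nat list \<Rightarrow> nat stream \<Rightarrow> real" where
  "sample_prob k d \<omega> =
     (if k \<le> NT T \<omega>
      then pmf (map_pmf (sampled_depths T \<omega>) (pmf_of_set (ksubsets (NT T \<omega>) k))) d else 0)"

lemma sample_prob_nonneg: "sample_prob k d \<omega> \<ge> 0"
  by (simp add: sample_prob_def)

lemma measurable_sample_prob[measurable]: "sample_prob k d \<in> borel_measurable M"
proof -
  define f where "f n l = (if k \<le> n
      then pmf (map_pmf (sampled_depths T (l @- sconst 0)) (pmf_of_set (ksubsets n k))) d else 0)"
    for n l
  have "sample_prob k d \<omega> = f (NT T \<omega>) (stake (NT T \<omega>) \<omega>)" for \<omega>
  proof (cases "k \<le> NT T \<omega>")
    case True
    let ?A = "ksubsets (NT T \<omega>) k"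
    have "set_pmf (pmf_of_set ?A) = ?A"
      using True by (simp add: ksubsets_eq_empty_iff finite_ksubsets)
    then have "map_pmf (sampled_depths T \<omega>) (pmf_of_set ?A)
        = map_pmf (sampled_depths T (stake (NT T \<omega>) \<omega> @- sconst 0)) (pmf_of_set ?A)"
      by (intro map_pmf_cong refl sampled_depths_stake) (auto simp: ksubsets_def)
    then show ?thesis
      using True by (simp add: sample_prob_def f_def)
  qed (simp add: sample_prob_def f_def)
  then have "sample_prob k d = (\<lambda>\<omega>. f (NT T \<omega>) (stake (NT T \<omega>) \<omega>))"
    by (simp add: fun_eq_iff)
  moreover have "(\<lambda>\<omega>. f (NT T \<omega>) (stake (NT T \<omega>) \<omega>)) \<in> borel_measurable M"
    by (rule measurable_compose_countable'[where f = "\<lambda>n \<omega>. f n (stake n \<omega>)" and I = UNIV]) simp_all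
  ultimately show ?thesis by simp
qed

lemma tree_cond_prob_eq:
  assumes "1 \<le> k"
  shows "tree_cond_prob p r T k d = enn2real (\<integral>\<^sup>+\<omega>. sample_prob k d \<omega> \<partial>M) / (1 - \<delta>) ^ (k - 1)"
proof -
  have "(\<integral>\<omega>. sample_prob k d \<omega> \<partial>M) = enn2real (\<integral>\<^sup>+\<omega>. sample_prob k d \<omega> \<partial>M)"
    by (rule enn2real_nn_integral_eq_integral[symmetric]) (simp_all add: sample_prob_nonneg)
  then show ?thesis
    unfolding tree_cond_prob_def Let_def prob_NT_ge[OF assms] by (simp add: sample_prob_def[abs_def])
qed

lemma sample_prob_eq_0:
  assumes "1 \<le> k" and "\<not> (length d = k \<and> d ! 0 = T)"
  shows "sample_prob k d \<omega> = 0"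
proof (cases "k \<le> NT T \<omega>")
  case True
  have "sampled_depths T \<omega> S \<noteq> d" if "S \<in> ksubsets (NT T \<omega>) k" for S
    using that assms by (auto simp: ksubsets_def sampled_depths_def)
  then show ?thesis
    using True ksubsets_eq_empty_iff[of "NT T \<omega>" k] finite_ksubsets[of "NT T \<omega>" k]
    by (auto simp: sample_prob_def pmf_map measure_pmf_of_set vimage_def Int_def)
qed (simp add: sample_prob_def)

lemma sample_prob_eq_sum_ksubsets:
  "sample_prob k d \<omega> = (\<Sum>S\<in>ksubsets (NT T \<omega>) k. of_bool (sampled_depths T \<omega> S = d) / (NT T \<omega> choose k))"
proof (cases "k \<le> NT T \<omega>")
  case True
  let ?A = "ksubsets (NT T \<omega>) k"
  have "sample_prob k d \<omega> = card (?A \<inter> {S. sampled_depths T \<omega> S = d}) / card ?A"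
    using True ksubsets_eq_empty_iff[of "NT T \<omega>" k] finite_ksubsets[of "NT T \<omega>" k]
    by (simp add: sample_prob_def pmf_map measure_pmf_of_set vimage_def Int_def)
  then show ?thesis
    using finite_ksubsets[of "NT T \<omega>" k]
    by (simp add: card_ksubsets sum_divide_distrib[symmetric] Int_def)
qed (simp add: sample_prob_def ksubsets_eq_empty_iff[THEN iffD2])

lemma sample_prob_eq_nn_integral_configs:
  assumes exceeds: "\<exists>i. T < \<omega> !! i" and "1 \<le> k" and xs: "length xs = k - 1"
  shows "ennreal (sample_prob k (T # xs) \<omega>) = (\<integral>\<^sup>+x. ennreal (1 / (fst (tip_config x) choose k)) *
      of_bool (config_event T x xs \<omega>) \<partial>count_space (gap_configs (k - 1)))"
proof -
  let ?c = "\<lambda>(n, S). ennreal (of_bool (NT T \<omega> = n \<and> sampled_depths T \<omega> S = T # xs) / (n choose k))"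
  have "ennreal (sample_prob k (T # xs) \<omega>) = (\<Sum>S\<in>ksubsets (NT T \<omega>) k. ?c (NT T \<omega>, S))"
    by (simp add: sample_prob_eq_sum_ksubsets)
  also have "\<dots> = (\<integral>\<^sup>+y. ?c y \<partial>count_space {(n, S). S \<in> ksubsets n k})"
    by (subst nn_integral_count_space'[where A = "Pair (NT T \<omega>) ` ksubsets (NT T \<omega>) k"])
       (auto simp: finite_ksubsets sum.reindex inj_on_def)
  also have "\<dots> = (\<integral>\<^sup>+x. ?c (tip_config x) \<partial>count_space (gap_configs (k - 1)))"
    by (rule nn_integral_bij_count_space[OF bij_betw_tip_config[OF \<open>1 \<le> k\<close>], symmetric])
  also have "\<dots> = (\<integral>\<^sup>+x. ennreal (1 / (fst (tip_config x) choose k)) *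
      of_bool (config_event T x xs \<omega>) \<partial>count_space (gap_configs (k - 1)))"
    using config_event_iff[OF _ xs exceeds]
    by (intro nn_integral_cong) (auto simp: case_prod_unfold)
  finally show ?thesis .
qed

lemma nn_integral_sample_prob_eq_config_sum:
  assumes k: "1 \<le> k" and xs: "length xs = k - 1"
  shows "(\<integral>\<^sup>+\<omega>. sample_prob k (T # xs) \<omega> \<partial>M)
    = (\<integral>\<^sup>+x. ennreal (1 / (fst (tip_config x) choose k)) * config_prob xs x \<partial>count_space (gap_configs (k - 1)))"
proof -
  let ?G = "count_space (gap_configs (k - 1))"
  let ?c = "\<lambda>x. ennreal (1 / (fst (tip_config x) choose k))"
  have "(\<integral>\<^sup>+\<omega>. sample_prob k (T # xs) \<omega> \<partial>M)
      = (\<integral>\<^sup>+\<omega>. (\<integral>\<^sup>+x. ?c x * of_bool (config_event T x xs \<omega>) \<partial>?G) \<partial>M)"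
    by (rule nn_integral_cong_AE, rule eventually_mono[OF AE_exceeds_T])
       (rule sample_prob_eq_nn_integral_configs[OF _ k xs])
  also have "\<dots> = (\<integral>\<^sup>+x. (\<integral>\<^sup>+\<omega>. ?c x * of_bool (config_event T x xs \<omega>) \<partial>M) \<partial>?G)"
    by (rule nn_integral_count_space_nn_integral[OF countableI_type]) simp
  also have "\<dots> = (\<integral>\<^sup>+x. ?c x * config_prob xs x \<partial>?G)"
  proof (rule nn_integral_cong)
    fix x assume "x \<in> space ?G"
    then show "(\<integral>\<^sup>+\<omega>. ?c x * of_bool (config_event T x xs \<omega>) \<partial>M) = ?c x * config_prob xs x"
      using nn_integral_config_event[of x xs] xs
      by (simp add: nn_integral_cmult del: config_event.simps)
  qed
  finally show ?thesis .
qed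

end

section \<open>Summation over the gap configurations\<close>

lemma nn_integral_Beta_nat:
  "(\<integral>\<^sup>+y. ennreal (indicator {0<..<1} y * (y ^ K * (1 - y) ^ m)) \<partial>lborel)
     = ennreal (fact K * fact m / fact (K + m + 1))"
proof -
  have "((\<lambda>t. t powr (real (Suc K) - 1) * (1 - t) powr (real (Suc m) - 1))
      has_integral Beta (Suc K) (Suc m)) {0..1}"
    by (rule has_integral_Beta_real) auto
  then have Ioo: "((\<lambda>t. t powr (real (Suc K) - 1) * (1 - t) powr (real (Suc m) - 1))
      has_integral Beta (Suc K) (Suc m)) {0<..<1}"
    by (simp add: has_integral_Icc_iff_Ioo)
  have "((\<lambda>t::real. t ^ K * (1 - t) ^ m) has_integral Beta (Suc K) (Suc m)) {0<..<1}"
    by (rule has_integral_spike_finite[OF finite.emptyI _ Ioo]) (auto simp: powr_realpow)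
  moreover have "Beta (Suc K) (Suc m) = fact K * fact m / fact (K + m + 1)"
    using Gamma_fact[of K, where 'a = real] Gamma_fact[of m, where 'a = real]
      Gamma_fact[of "K + m + 1", where 'a = real]
    by (simp add: Beta_def add_ac)
  ultimately show ?thesis
    by (intro nn_integral_has_integral_lebesgue) auto
qed

lemma inverse_binomial_eq_nn_integral:
  "ennreal (1 / ((K + 1 + m) choose (K + 1))) =
   (\<integral>\<^sup>+y. ennreal (indicator {0<..<1} y * (real (K + 1) * y ^ K * (1 - y) ^ m)) \<partial>lborel)"
proof -
  have "real ((K + 1 + m) choose (K + 1)) = fact (K + 1 + m) / (fact (K + 1) * fact m)"
    using binomial_fact[of "K + 1" "K + 1 + m"] by simp
  moreover have "fact (K + 1) = real (K + 1) * fact K"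
    by simp
  ultimately have "1 / real ((K + 1 + m) choose (K + 1)) = real (K + 1) * (fact K * fact m / fact (K + m + 1))"
    by (simp add: add_ac)
  also have "ennreal \<dots> = ennreal (real (K + 1)) * ennreal (fact K * fact m / fact (K + m + 1))"
    by (rule ennreal_mult') simp
  also have "\<dots> = (\<integral>\<^sup>+y. ennreal (real (K + 1)) * ennreal (indicator {0<..<1} y * (y ^ K * (1 - y) ^ m)) \<partial>lborel)"
    by (subst nn_integral_cmult) (simp_all only: nn_integral_Beta_nat, measurable)
  also have "\<dots> = (\<integral>\<^sup>+y. ennreal (indicator {0<..<1} y * (real (K + 1) * y ^ K * (1 - y) ^ m)) \<partial>lborel)"
    by (intro nn_integral_cong, subst ennreal_mult'[symmetric]) (simp_all add: mult_ac)
  finally show ?thesis .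
qed

lemma nn_integral_count_space_Times:
  assumes "countable A" "countable B"
  shows "(\<integral>\<^sup>+x. f x \<partial>count_space (A \<times> B)) = (\<integral>\<^sup>+a. \<integral>\<^sup>+b. f (a, b) \<partial>count_space B \<partial>count_space A)"
proof -
  interpret A: sigma_finite_measure "count_space A"
    by (rule sigma_finite_measure_count_space_countable[OF assms(1)])
  interpret B: sigma_finite_measure "count_space B"
    by (rule sigma_finite_measure_count_space_countable[OF assms(2)])
  have "(\<integral>\<^sup>+a. \<integral>\<^sup>+b. f (a, b) \<partial>count_space B \<partial>count_space A)
      = integral\<^sup>N (count_space A \<Otimes>\<^sub>M count_space B) f"
    by (rule B.nn_integral_fst) (simp add: pair_measure_countable[OF assms])
  then show ?thesis
    by (simp add: pair_measure_countable[OF assms])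
qed

lemma nn_integral_geometric:
  fixes z :: real
  assumes "0 \<le> z" "z < 1"
  shows "(\<integral>\<^sup>+a. ennreal (z ^ a) \<partial>count_space UNIV) = ennreal (1 / (1 - z))"
  unfolding nn_integral_count_space_nat
  using assms by (intro suminf_ennreal_eq geometric_sums) auto

lemma prod_list_ennreal:
  "(\<And>x. x \<in> set xs \<Longrightarrow> 0 \<le> f x) \<Longrightarrow> (\<Prod>x\<leftarrow>xs. ennreal (f x)) = ennreal (\<Prod>x\<leftarrow>xs. f x)"
  by (induction xs) (auto simp: ennreal_mult' prod_list_nonneg)

lemma bij_betw_Cons_positive_lists:
  "bij_betw (\<lambda>(g, gs). g # gs) ({0<..} \<times> positive_lists n) (positive_lists (Suc n))"
  unfolding positive_lists_def by (rule bij_betwI') (auto simp: length_Suc_conv)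

lemma nn_integral_positive_lists_prod:
  assumes "\<And>g x. f g x \<ge> 0"
  shows "(\<integral>\<^sup>+gs. ennreal (prod_list (map2 f gs xs)) \<partial>count_space (positive_lists (length xs)))
    = (\<Prod>x\<leftarrow>xs. \<integral>\<^sup>+g. ennreal (f g x) \<partial>count_space {0<..})"
proof (induction xs)
  case Nil
  have "positive_lists 0 = {[]}" by (auto simp: positive_lists_def)
  then show ?case by simp
next
  case (Cons x xs)
  have "(\<integral>\<^sup>+gs. ennreal (prod_list (map2 f gs (x # xs))) \<partial>count_space (positive_lists (length (x # xs))))
      = (\<integral>\<^sup>+(g, gs). ennreal (f g x * prod_list (map2 f gs xs)) \<partial>count_space ({0<..} \<times> positive_lists (length xs)))"
    by (simp add: nn_integral_bij_count_space[OF bij_betw_Cons_positive_lists, symmetric] case_prod_unfold)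
  also have "\<dots> = (\<integral>\<^sup>+g. ennreal (f g x) * (\<integral>\<^sup>+gs. ennreal (prod_list (map2 f gs xs))
      \<partial>count_space (positive_lists (length xs))) \<partial>count_space {0<..})"
    by (simp add: nn_integral_count_space_Times ennreal_mult' assms prod_list_nonneg nn_integral_cmult
        set_zip_rightD[THEN imageI])
  also have "\<dots> = (\<Prod>x\<leftarrow>x # xs. \<integral>\<^sup>+g. ennreal (f g x) \<partial>count_space {0<..})"
    by (simp add: Cons.IH nn_integral_multc)
  finally show ?case .
qed

lemma prod_list_map2_power_weight:
  fixes w :: real
  assumes "gs \<in> positive_lists (length xs)"
  shows "prod_list (map2 (\<lambda>g x. w ^ (g - 1) * f g x) gs xs)
    = w ^ (sum_list gs - length gs) * prod_list (map2 f gs xs)"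
  using assms
proof (induction xs arbitrary: gs)
  case (Cons x xs)
  then obtain g gs' where gs: "gs = g # gs'" "0 < g" "gs' \<in> positive_lists (length xs)"
    by (cases gs) (auto simp: positive_lists_def)
  have "length gs' \<le> sum_list gs'"
    by (rule length_le_sum_list_positive) (use gs(3) in \<open>simp add: positive_lists_def\<close>)
  then have "g + sum_list gs' - Suc (length gs') = (g - 1) + (sum_list gs' - length gs')"
    using gs(2) by simp
  then show ?case
    using Cons.IH[OF gs(3)] by (simp add: gs power_add mult_ac)
qed (simp add: positive_lists_def)

lemma nn_integral_geometric_block:
  fixes w F0 F1 :: real
  assumes "0 \<le> w" "w < 1" "0 \<le> F0" "F0 \<le> F1" "F1 \<le> 1"
  shows "(\<integral>\<^sup>+g. ennreal (w ^ (g - 1) * (F1 ^ g - F0 ^ g)) \<partial>count_space {0<..})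
     = ennreal (F1 / (1 - w * F1) - F0 / (1 - w * F0))"
proof -
  have bij: "bij_betw Suc UNIV {0<..}"
    by (rule bij_betwI') (auto simp: gr0_conv_Suc)
  have sums: "(\<lambda>g. F * (w * F) ^ g) sums (F / (1 - w * F))" if "0 \<le> F" "F \<le> 1" for F :: real
  proof -
    have "w * F \<le> w" using assms that by (simp add: mult_left_le)
    then have "(\<lambda>g. (w * F) ^ g) sums (1 / (1 - w * F))"
      using assms that by (intro geometric_sums) auto
    then show ?thesis using sums_mult[of _ _ F] by fastforce
  qed
  have "(\<lambda>g. w ^ g * (F1 ^ Suc g - F0 ^ Suc g)) sums (F1 / (1 - w * F1) - F0 / (1 - w * F0))"
    using sums_diff[OF sums[of F1] sums[of F0]] assms by (simp add: algebra_simps)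
  moreover have "0 \<le> w ^ g * (F1 ^ Suc g - F0 ^ Suc g)" for g
  proof -
    have "F0 ^ Suc g \<le> F1 ^ Suc g"
      using assms by (intro power_mono) auto
    then show ?thesis
      using assms by simp
  qed
  ultimately have "(\<Sum>g. ennreal (w ^ g * (F1 ^ Suc g - F0 ^ Suc g)))
      = ennreal (F1 / (1 - w * F1) - F0 / (1 - w * F0))"
    by (intro suminf_ennreal_eq)
  then show ?thesis
    by (simp add: nn_integral_bij_count_space[OF bij, symmetric] nn_integral_count_space_nat)
qed

context linear_fractional_cpp
begin

definition block_series :: "real \<Rightarrow> nat \<Rightarrow> real" where
  "block_series y x =
     (if x \<le> T then Hcdf x / (1 - (1 - y) * Hcdf x) - Hcdf (x - 1) / (1 - (1 - y) * Hcdf (x - 1))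
      else 0)"

lemma block_series_nonneg:
  assumes "0 < y" "y < 1"
  shows "block_series y x \<ge> 0"
proof -
  have "(1 - y) * Hcdf n < 1" for n
  proof -
    have "(1 - y) * Hcdf n \<le> 1 - y"
      using assms Hcdf_le_1[of n] by (intro mult_left_le) auto
    then show ?thesis
      using assms by linarith
  qed
  moreover have "(1 - y) * Hcdf (x - 1) \<le> (1 - y) * Hcdf x"
    using assms Hcdf_mono[of "x - 1" x] by (intro mult_left_mono) auto
  ultimately show ?thesis
    using Hcdf_mono[of "x - 1" x] Hcdf_nonneg[of "x - 1"]
    by (auto simp: block_series_def intro!: frac_le)
qed

lemma nn_integral_block_series:
  assumes "0 < y" "y < 1"
  shows "(\<integral>\<^sup>+g. ennreal ((1 - y) ^ (g - 1) * block_max_prob g x) \<partial>count_space {0<..})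
    = block_series y x"
proof (cases "x \<le> T")
  case True
  then show ?thesis
    using nn_integral_geometric_block[of "1 - y" "Hcdf (x - 1)" "Hcdf x"] assms
      Hcdf_nonneg[of "x - 1"] Hcdf_mono[of "x - 1" x] Hcdf_le_1[of x]
    by (simp add: block_max_prob_def block_series_def)
qed (simp add: block_max_prob_def block_series_def)

lemma discount_bounds:
  assumes "0 < y" "y < 1"
  shows "0 \<le> (1 - \<delta>) * (1 - y)" "(1 - \<delta>) * (1 - y) < 1"
proof -
  have "(1 - \<delta>) * (1 - y) \<le> 1 - y"
    using assms delta_pos delta_less_1 by (intro mult_left_le_one_le) auto
  then show "0 \<le> (1 - \<delta>) * (1 - y)" "(1 - \<delta>) * (1 - y) < 1"
    using assms delta_less_1 by (simp, linarith)
qed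

lemma nn_integral_gap_configs_geometric:
  assumes y: "0 < y" "y < 1"
  defines "z \<equiv> (1 - \<delta>) * (1 - y)"
  shows "(\<integral>\<^sup>+(a, gs, b). ennreal (z ^ a) * ennreal (prod_list (map2 (\<lambda>g x. (1 - y) ^ (g - 1) * block_max_prob g x) gs xs))
      * ennreal (z ^ b) \<partial>count_space (gap_configs (length xs)))
    = ennreal (1 / (1 - z)) * ennreal (prod_list (map (block_series y) xs)) * ennreal (1 / (1 - z))"
proof -
  have z: "0 \<le> z" "z < 1"
    using discount_bounds[OF y] by (simp_all add: z_def)
  have weight_nonneg: "(1 - y) ^ (g - 1) * block_max_prob g x \<ge> 0" for g x
    using y block_max_prob_nonneg by simp
  have "(\<integral>\<^sup>+gs. ennreal (prod_list (map2 (\<lambda>g x. (1 - y) ^ (g - 1) * block_max_prob g x) gs xs))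
      \<partial>count_space (positive_lists (length xs)))
    = (\<Prod>x\<leftarrow>xs. \<integral>\<^sup>+g. ennreal ((1 - y) ^ (g - 1) * block_max_prob g x) \<partial>count_space {0<..})"
    by (rule nn_integral_positive_lists_prod) (rule weight_nonneg)
  also have "\<dots> = ennreal (prod_list (map (block_series y) xs))"
    by (simp only: nn_integral_block_series[OF y]) (simp add: prod_list_ennreal block_series_nonneg[OF y])
  finally show ?thesis
    unfolding gap_configs_def
    by (simp add: nn_integral_count_space_Times nn_integral_cmult nn_integral_multc
        nn_integral_geometric[OF z] case_prod_unfold)
qed

lemma Beta_weight_config_prob_eq:
  assumes "(a, gs, b) \<in> gap_configs (length xs)"
  shows "(1 - y) ^ (fst (tip_config (a, gs, b)) - Suc (length xs)) * config_prob xs (a, gs, b)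
    = \<delta> * ((1 - \<delta>) * (1 - y)) ^ a * prod_list (map2 (\<lambda>g x. (1 - y) ^ (g - 1) * block_max_prob g x) gs xs)
      * ((1 - \<delta>) * (1 - y)) ^ b"
proof -
  have gs: "gs \<in> positive_lists (length xs)"
    using assms by (simp add: positive_lists_def)
  have "length gs \<le> sum_list gs"
    by (rule length_le_sum_list_positive) (use assms in simp)
  then have "fst (tip_config (a, gs, b)) - Suc (length xs) = a + b + (sum_list gs - length gs)"
    using assms by (simp add: tip_config_def)
  then show ?thesis
    unfolding prod_list_map2_power_weight[OF gs]
    using assms by (simp add: config_prob_def power_add power_mult_distrib mult_ac)
qed

lemma nn_integral_config_prob_Beta_weight:
  assumes y: "0 < y" "y < 1" and xs: "length xs = K"
  shows "(\<integral>\<^sup>+x. ennreal (real (K + 1) * y ^ K * (1 - y) ^ (fst (tip_config x) - (K + 1))) *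
      ennreal (config_prob xs x) \<partial>count_space (gap_configs K))
    = ennreal (real (K + 1) * \<delta> * y ^ K / (1 - (1 - \<delta>) * (1 - y)) ^ 2 * prod_list (map (block_series y) xs))"
proof -
  define z where "z = (1 - \<delta>) * (1 - y)"
  define C where "C = real (K + 1) * y ^ K * \<delta>"
  have "z < 1"
    using discount_bounds[OF y] by (simp add: z_def)
  have C: "C \<ge> 0"
    using y delta_pos by (simp add: C_def)
  let ?w = "\<lambda>g x. (1 - y) ^ (g - 1) * block_max_prob g x"
  have factor: "ennreal (real (K + 1) * y ^ K * (1 - y) ^ (fst (tip_config (a, gs, b)) - (K + 1))) *
      ennreal (config_prob xs (a, gs, b))
      = ennreal C * (ennreal (z ^ a) * ennreal (prod_list (map2 ?w gs xs)) * ennreal (z ^ b))"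
    if "(a, gs, b) \<in> gap_configs K" for a gs b
  proof -
    have "real (K + 1) * y ^ K * (1 - y) ^ (fst (tip_config (a, gs, b)) - (K + 1)) * config_prob xs (a, gs, b)
        = C * (z ^ a * prod_list (map2 ?w gs xs) * z ^ b)"
      using Beta_weight_config_prob_eq[of a gs b xs y] that xs by (simp add: C_def z_def mult.assoc)
    moreover have "prod_list (map2 ?w gs xs) \<ge> 0"
      using y block_max_prob_nonneg by (auto intro!: prod_list_nonneg)
    ultimately show ?thesis
      using y C config_prob_nonneg[of xs "(a, gs, b)"] \<open>z < 1\<close> delta_less_1
      by (simp add: ennreal_mult'[symmetric] z_def)
  qed
  have "(\<integral>\<^sup>+x. ennreal (real (K + 1) * y ^ K * (1 - y) ^ (fst (tip_config x) - (K + 1))) *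
      ennreal (config_prob xs x) \<partial>count_space (gap_configs K))
    = ennreal C * (\<integral>\<^sup>+(a, gs, b). ennreal (z ^ a) * ennreal (prod_list (map2 ?w gs xs)) * ennreal (z ^ b)
      \<partial>count_space (gap_configs K))"
    by (subst nn_integral_cmult[symmetric], simp, rule nn_integral_cong)
       (simp only: split_paired_all prod.case space_count_space, rule factor)
  also have "\<dots> = ennreal C * (ennreal (1 / (1 - z)) * ennreal (prod_list (map (block_series y) xs)) * ennreal (1 / (1 - z)))"
    using nn_integral_gap_configs_geometric[OF y, of xs] xs by (simp add: z_def)
  also have "\<dots> = ennreal (real (K + 1) * \<delta> * y ^ K / (1 - z) ^ 2 * prod_list (map (block_series y) xs))"
    using C \<open>z < 1\<close> prod_list_nonneg[of "map (block_series y) xs"] block_series_nonneg[OF y]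
    by (simp add: ennreal_mult'[symmetric] C_def power2_eq_square mult_ac)
  finally show ?thesis
    by (simp add: z_def)
qed

lemma nn_integral_sample_prob:
  assumes k: "1 \<le> k" and xs: "length xs = k - 1"
  shows "(\<integral>\<^sup>+\<omega>. sample_prob k (T # xs) \<omega> \<partial>M) = (\<integral>\<^sup>+y. ennreal (indicator {0<..<1} y *
     (k * \<delta> * y ^ (k - 1) / (1 - (1 - \<delta>) * (1 - y)) ^ 2 * prod_list (map (block_series y) xs))) \<partial>lborel)"
proof -
  let ?G = "count_space (gap_configs (k - 1))"
  let ?beta = "\<lambda>x y. ennreal (indicator {0<..<1} y * (real k * y ^ (k - 1) * (1 - y) ^ (fst (tip_config x) - k)))"
  have "(\<integral>\<^sup>+\<omega>. sample_prob k (T # xs) \<omega> \<partial>M)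
      = (\<integral>\<^sup>+x. ennreal (1 / (fst (tip_config x) choose k)) * config_prob xs x \<partial>?G)"
    by (rule nn_integral_sample_prob_eq_config_sum[OF k xs])
  also have "\<dots> = (\<integral>\<^sup>+x. (\<integral>\<^sup>+y. ?beta x y * config_prob xs x \<partial>lborel) \<partial>?G)"
  proof (intro nn_integral_cong)
    fix x assume "x \<in> space ?G"
    then obtain m where "fst (tip_config x) = k + m"
      using fst_tip_config_ge[of x "k - 1"] k by (auto dest: le_Suc_ex)
    then have "ennreal (1 / (fst (tip_config x) choose k)) = (\<integral>\<^sup>+y. ?beta x y \<partial>lborel)"
      using inverse_binomial_eq_nn_integral[of "k - 1" m] k by simp
    then show "ennreal (1 / (fst (tip_config x) choose k)) * config_prob xs x
        = (\<integral>\<^sup>+y. ?beta x y * config_prob xs x \<partial>lborel)"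
      by (simp add: nn_integral_multc)
  qed
  also have "\<dots> = (\<integral>\<^sup>+y. (\<integral>\<^sup>+x. ?beta x y * config_prob xs x \<partial>?G) \<partial>lborel)"
    by (rule nn_integral_count_space_nn_integral[OF countableI_type, symmetric]) measurable
  also have "\<dots> = (\<integral>\<^sup>+y. ennreal (indicator {0<..<1} y *
     (k * \<delta> * y ^ (k - 1) / (1 - (1 - \<delta>) * (1 - y)) ^ 2 * prod_list (map (block_series y) xs))) \<partial>lborel)"
  proof (intro nn_integral_cong)
    fix y :: real
    show "(\<integral>\<^sup>+x. ?beta x y * config_prob xs x \<partial>?G) = ennreal (indicator {0<..<1} y *
     (k * \<delta> * y ^ (k - 1) / (1 - (1 - \<delta>) * (1 - y)) ^ 2 * prod_list (map (block_series y) xs)))"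
    proof (cases "0 < y \<and> y < 1")
      case True
      then show ?thesis
        using nn_integral_config_prob_Beta_weight[of y xs "k - 1"] xs k by simp
    qed (auto simp: indicator_def)
  qed
  finally show ?thesis .
qed

end

section \<open>Identification of the mixing laws\<close>

lemma moebius_ratio_eq:
  fixes U V C y :: real
  assumes "C > 0" "V > 0" "U \<ge> 0" "y > 0"
  shows "U * (C + y * V) / (V * (C + y * U))
    = (1 - (1 - C / (V + C)) * (1 - y)) / (1 - C / (V + C)) * (U / (U + C) / (1 - (1 - y) * (U / (U + C))))"
proof -
  have "y * U \<ge> 0"
    using assms by simp
  then have nz: "V + C \<noteq> 0" "U + C \<noteq> 0" "C + y * U \<noteq> 0"
    using assms by linarith+
  have "1 - C / (V + C) = V / (V + C)"
    using nz by (simp add: field_simps)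
  moreover have "1 - V / (V + C) * (1 - y) = (C + y * V) / (V + C)"
    using nz by (simp add: field_simps)
  moreover have "1 - (1 - y) * (U / (U + C)) = (C + y * U) / (U + C)"
    using nz by (simp add: field_simps)
  ultimately show ?thesis
    using nz assms(2) by simp
qed

lemma moebius_ratio_eq_tails:
  fixes U V C y :: real
  assumes "C > 0" "V > 0" "U \<ge> 0" "y > 0"
  shows "U * (C + y * V) / (V * (C + y * U)) = (1 - C / (y * U + C)) / (1 - C / (y * V + C))"
proof -
  have "y * U \<ge> 0" "y * V > 0"
    using assms by simp_all
  then have nz: "y * U + C \<noteq> 0" "y * V + C \<noteq> 0"
    using assms by linarith+
  have "1 - C / (y * U + C) = y * U / (y * U + C)" "1 - C / (y * V + C) = y * V / (y * V + C)"
    using nz by (simp_all add: field_simps)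
  moreover have "y * U / (y * U + C) / (y * V / (y * V + C)) = y * (U * (C + y * V)) / (y * (V * (C + y * U)))"
    using nz by (simp add: field_simps)
  ultimately show ?thesis
    using assms(4) by (simp only: mult_divide_mult_cancel_left_if) simp
qed

lemma borel_measurable_prod_list_map [measurable]:
  fixes f :: "'a \<Rightarrow> 'b \<Rightarrow> real"
  assumes "\<And>x. (\<lambda>y. f y x) \<in> borel_measurable N"
  shows "(\<lambda>y. prod_list (map (f y) xs)) \<in> borel_measurable N"
  using assms by (induction xs) auto

context linear_fractional_cpp
begin

lemma u_T_pos: "u T > 0"
  using T_pos by (intro u_pos) simp

lemma Gcdf_eq_u:
  assumes "j \<le> T" "0 < y"
  shows "Gcdf p r T y j = u j * (r - p + y * u T) / (u T * (r - p + y * u j))"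
proof -
  have pos: "r - p + y * u j > 0" "r - p + y * u T > 0"
    using r_minus_p_pos u_nonneg[of j] u_T_pos assms(2) by (simp_all add: add_pos_nonneg)
  consider "j = 0" | "j = T" | "0 < j" "j < T"
    using assms(1) by linarith
  then show ?thesis
  proof cases
    case 1
    then show ?thesis by (simp add: Gcdf_def u_def)
  next
    case 2
    then show ?thesis using T_pos u_T_pos pos by (simp add: Gcdf_def)
  next
    case 3
    then have "Gcdf p r T y j = ((r / p) ^ j - 1) / ((r / p) ^ T - 1) *
        ((r - p + y * (1 - p) * ((r / p) ^ T - 1)) / (r - p + y * (1 - p) * ((r / p) ^ j - 1)))"
      by (simp add: Gcdf_def)
    also have "\<dots> = u j / u T * ((r - p + y * u T) / (r - p + y * u j))"
      using p_less_1 by (simp add: u_def mult.assoc)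
    finally show ?thesis
      by simp
  qed
qed

lemma Hcdf_eq_u: "Hcdf j = u j / (u j + (r - p))"
  using r_minus_p_pos u_nonneg[of j] by (simp add: Htail_eq field_simps)

lemma Gcdf_eq_Hcdf:
  assumes "j \<le> T" "0 < y" "y < 1"
  shows "Gcdf p r T y j = (1 - (1 - \<delta>) * (1 - y)) / (1 - \<delta>) * (Hcdf j / (1 - (1 - y) * Hcdf j))"
proof -
  show ?thesis
    unfolding Gcdf_eq_u[OF assms(1,2)] Hcdf_eq_u Htail_eq[of T]
    by (rule moebius_ratio_eq[OF r_minus_p_pos u_T_pos u_nonneg assms(2)])
qed

lemma Gprob_eq_block_series:
  assumes "0 < y" "y < 1"
  shows "Gprob p r T y x = (1 - (1 - \<delta>) * (1 - y)) / (1 - \<delta>) * block_series y x"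
proof -
  consider "x = 0" | "0 < x" "x \<le> T" | "T < x"
    by linarith
  then show ?thesis
  proof cases
    case 1
    then show ?thesis by (simp add: Gprob_def Gcdf_def block_series_def)
  next
    case 2
    then show ?thesis
      using Gcdf_eq_Hcdf[of x y] Gcdf_eq_Hcdf[of "x - 1" y] assms
      by (simp add: Gprob_def block_series_def right_diff_distrib)
  next
    case 3
    then show ?thesis
      using T_pos by (simp add: Gprob_def Gcdf_def block_series_def)
  qed
qed

lemma Gcdf_eq_Hytail:
  assumes "j \<le> T" "0 < y"
  shows "Gcdf p r T y j = (1 - Hytail p r y j) / (1 - Hytail p r y T)"
proof -
  have Hytail: "Hytail p r y n = (r - p) / (y * u n + (r - p))" for n
    unfolding Hytail_def u_def by (simp add: algebra_simps)
  show ?thesis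
    unfolding Gcdf_eq_u[OF assms] Hytail
    by (rule moebius_ratio_eq_tails[OF r_minus_p_pos u_T_pos u_nonneg assms(2)])
qed

lemma Hyprob_div_eq_Gprob:
  assumes "0 < y" "1 \<le> x" "x \<le> T"
  shows "Hyprob p r y x / (1 - Hytail p r y T) = Gprob p r T y x"
  using assms Gcdf_eq_Hytail[of x y] Gcdf_eq_Hytail[of "x - 1" y]
  by (simp add: Hyprob_def Gprob_def diff_divide_distrib)

lemma borel_measurable_block_series [measurable]: "(\<lambda>y. block_series y x) \<in> borel_measurable borel"
  by (cases "x \<le> T") (simp_all add: block_series_def)

lemma prod_Gprob_eq_block_series:
  assumes "0 < y" "y < 1"
  shows "(\<Prod>i\<in>{1..<Suc (length xs)}. Gprob p r T y ((T # xs) ! i))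
    = ((1 - (1 - \<delta>) * (1 - y)) / (1 - \<delta>)) ^ length xs * prod_list (map (block_series y) xs)"
proof -
  have "(\<Prod>i\<in>{1..<Suc (length xs)}. Gprob p r T y ((T # xs) ! i)) = (\<Prod>i<length xs. Gprob p r T y (xs ! i))"
    using prod.shift_bounds_Suc_ivl[of "\<lambda>i. Gprob p r T y ((T # xs) ! i)" 0 "length xs"]
    by (simp add: atLeast0LessThan)
  also have "\<dots> = (\<Prod>i<length xs. (1 - (1 - \<delta>) * (1 - y)) / (1 - \<delta>) * block_series y (xs ! i))"
    by (simp add: Gprob_eq_block_series[OF assms])
  also have "\<dots> = ((1 - (1 - \<delta>) * (1 - y)) / (1 - \<delta>)) ^ length xs * prod_list (map (block_series y) xs)"
    by (subst prod.distrib) (simp add: prod.list_conv_set_nth atLeast0LessThan)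
  finally show ?thesis .
qed

lemma mixture_integrand_eq:
  assumes "0 < y" "y < 1" "length xs = k - 1" "1 \<le> k"
  shows "mu_dens k \<delta> y * (\<Prod>i\<in>{1..<k}. Gprob p r T y ((T # xs) ! i))
    = k * \<delta> * y ^ (k - 1) / (1 - (1 - \<delta>) * (1 - y)) ^ 2 * prod_list (map (block_series y) xs)
      / (1 - \<delta>) ^ (k - 1)"
proof -
  define A where "A = 1 - (1 - \<delta>) * (1 - y)"
  define B where "B = 1 - \<delta>"
  define K where "K = k - 1"
  have "A \<noteq> 0" "B \<noteq> 0"
    using discount_bounds[OF assms(1,2)] delta_less_1 by (simp_all add: A_def B_def)
  then have cancel: "c / A ^ (K + 2) * ((A / B) ^ K * P) = c / A ^ 2 * P / B ^ K" for c P
    by (simp add: power_add field_simps power2_eq_square)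
  have k: "k = Suc K"
    using assms(4) by (simp add: K_def)
  have "mu_dens k \<delta> y = k * \<delta> * y ^ K / A ^ (K + 2)"
    by (simp add: mu_dens_def A_def k)
  moreover have "(\<Prod>i\<in>{1..<k}. Gprob p r T y ((T # xs) ! i)) = (A / B) ^ K * prod_list (map (block_series y) xs)"
    using prod_Gprob_eq_block_series[OF assms(1,2), of xs] assms(3) by (simp add: A_def B_def k)
  ultimately show ?thesis
    by (simp only: cancel) (simp add: A_def B_def K_def)
qed

lemma mixture_prob_eq:
  assumes k: "1 \<le> k" and xs: "length xs = k - 1"
  shows "mixture_prob p r T k (T # xs) = enn2real (\<integral>\<^sup>+\<omega>. sample_prob k (T # xs) \<omega> \<partial>M) / (1 - \<delta>) ^ (k - 1)"
proof -
  define h where "h y = indicator {0<..<1} y *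
    (k * \<delta> * y ^ (k - 1) / (1 - (1 - \<delta>) * (1 - y)) ^ 2 * prod_list (map (block_series y) xs))" for y
  have h_nonneg: "h y \<ge> 0" for y
  proof (cases "0 < y \<and> y < 1")
    case True
    then have "prod_list (map (block_series y) xs) \<ge> 0"
      using block_series_nonneg[of y] True by (auto intro!: prod_list_nonneg)
    then show ?thesis
      using True delta_pos by (simp add: h_def)
  qed (auto simp: h_def indicator_def)
  have "mixture_prob p r T k (T # xs)
      = (\<integral>y. indicator {0<..<1} y * (mu_dens k \<delta> y * (\<Prod>i\<in>{1..<k}. Gprob p r T y ((T # xs) ! i))) \<partial>lborel)"
    using k xs by (simp add: mixture_prob_def set_lebesgue_integral_def)
  also have "\<dots> = (\<integral>y. h y / (1 - \<delta>) ^ (k - 1) \<partial>lborel)"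
    using mixture_integrand_eq[OF _ _ xs k] by (intro Bochner_Integration.integral_cong) (auto simp: h_def split: split_indicator)
  also have "\<dots> = (\<integral>y. h y \<partial>lborel) / (1 - \<delta>) ^ (k - 1)"
    by (rule integral_divide_zero)
  also have "(\<integral>y. h y \<partial>lborel) = enn2real (\<integral>\<^sup>+y. h y \<partial>lborel)"
  proof (rule enn2real_nn_integral_eq_integral[symmetric])
    show "AE y in lborel. 0 \<le> h y"
      using h_nonneg by simp
    show "h \<in> borel_measurable lborel"
      unfolding h_def[abs_def] by measurable
  qed simp
  finally show ?thesis
    by (simp add: nn_integral_sample_prob[OF k xs] h_def)
qed

lemma tree_cond_prob_eq_mixture_prob:
  assumes "1 \<le> k"
  shows "tree_cond_prob p r T k d = mixture_prob p r T k d"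
proof (cases "length d = k \<and> d ! 0 = T")
  case True
  then obtain xs where "d = T # xs" "length xs = k - 1"
    using assms by (cases d) auto
  then show ?thesis
    using assms by (simp add: tree_cond_prob_eq mixture_prob_eq)
next
  case False
  then show ?thesis
    using assms by (simp add: tree_cond_prob_eq sample_prob_eq_0 mixture_prob_def if_not_P[OF False])
qed

lemma mixture_prob_eq_Hyprob:
  assumes "1 \<le> k" "length xs = k - 1" "set xs \<subseteq> {1..T}"
  shows "mixture_prob p r T k (T # xs) = (LINT y:{0<..<1}|lborel. mu_dens k \<delta> y *
    (\<Prod>i<k - 1. Hyprob p r y (xs ! i) / (1 - Hytail p r y T)))"
proof -
  have "(\<Prod>i\<in>{1..<k}. Gprob p r T y ((T # xs) ! i)) = (\<Prod>i<k - 1. Hyprob p r y (xs ! i) / (1 - Hytail p r y T))"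
    if "0 < y" for y
  proof -
    have "(\<Prod>i\<in>{1..<k}. Gprob p r T y ((T # xs) ! i)) = (\<Prod>i<k - 1. Gprob p r T y (xs ! i))"
      using prod.shift_bounds_Suc_ivl[of "\<lambda>i. Gprob p r T y ((T # xs) ! i)" 0 "k - 1"] assms(1)
      by (simp add: atLeast0LessThan)
    also have "\<dots> = (\<Prod>i<k - 1. Hyprob p r y (xs ! i) / (1 - Hytail p r y T))"
      using assms(2,3) nth_mem[of _ xs] Hyprob_div_eq_Gprob[OF that]
      by (intro prod.cong) (auto simp: subset_iff)
    finally show ?thesis .
  qed
  then show ?thesis
    using assms by (auto simp: mixture_prob_def intro!: set_lebesgue_integral_cong)
qed

end

theorem corollary2p9:
  fixes p r :: real and T k :: nat
  assumes "0 < p" and "p < 1" and "0 \<le> r" and "r \<le> 1" and "p \<noteq> r" and "r / p > 1"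
    and "1 \<le> T" and "1 \<le> k"
  shows "(\<forall>d :: nat list. tree_cond_prob p r T k d = mixture_prob p r T k d)
    \<and> (\<forall>xs :: nat list. length xs = k - 1 \<longrightarrow> set xs \<subseteq> {1..T} \<longrightarrow>
         tree_cond_prob p r T k (T # xs) =
           (LINT y:{0<..<1}|lborel. mu_dens k (Htail p r T) y *
              (\<Prod>i<k - 1. Hyprob p r y (xs ! i) / (1 - Hytail p r y T))))"
proof -
  interpret linear_fractional_cpp p r T
    using assms by unfold_locales auto
  show ?thesis
    using tree_cond_prob_eq_mixture_prob[OF \<open>1 \<le> k\<close>] mixture_prob_eq_Hyprob[OF \<open>1 \<le> k\<close>]
    by simp
qed

end
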